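(* Let $\alpha, \beta$ be voltage assignments. Every isomorphism of $\mathbf{Z}/\ell$-covering graphs $f \colon X^\alpha \to X^\beta$ is of the form $f(x,i) = (t x^\sigma + a, i + k)$ for some $t \in \mathbf{F}_q^{\boxtimes}$, $\sigma \in \mathrm{Gal}(\mathbf{F}_q/\mathbf{F}_p)$, $a \in \mathbf{F}_q$, $k \in \mathbf{Z}/\ell$ satisfying $\alpha(s) = \beta(t s^\sigma)$ for all $s \in \mathbf{F}_q^{\boxtimes}$. Conversely, for any such $t, \sigma, a, k$ with $\alpha(s) = \beta(ts^\sigma)$ for all $s \in \mathbf{F}_q^{\boxtimes}$, the map $(x,i) \mapsto (tx^\sigma + a, i+k)$ is an isomorphism of $\mathbf{Z}/\ell$-covering graphs $X^\alpha \to X^\beta$.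
   Context: Let $\mathbf{F}_q$ be a finite field of characteristic $p$, $q = p^r \equiv 1 \pmod 4$, $\mathbf{F}_q^{\boxtimes}$ the set of nonzero squares, and $\ell \neq p$ a prime. A voltage assignment is a function $\alpha \colon \mathbf{F}_q^{\boxtimes} \to \mathbf{Z}/\ell$, not identically zero, with $\alpha(-s) = -\alpha(s)$. The graph $X^\alpha$ has vertex set $\mathbf{F}_q \times \mathbf{Z}/\ell$, with $(x,i)$ adjacent to $(y,j)$ iff $y - x \in \mathbf{F}_q^{\boxtimes}$ and $j - i = \alpha(y-x)$; it covers the Paley graph $X(\mathbf{F}_q)$ (vertex set $\mathbf{F}_q$, $x \sim y$ iff $y - x \in \mathbf{F}_q^{\boxtimes}$) via $(x,i) \mapsto x$, and $\mathbf{Z}/\ell$ acts by $j\cdot(x,i) = (x,i+j)$. An isomorphism of $\mathbf{Z}/\ell$-covering graphs $X^\alpha \to X^\beta$ is a graph isomorphism $f$ satisfying $f(x,i+j) = f(x,i) + (0,j)$ for all $x \in \mathbf{F}_q$, $i,j \in \mathbf{Z}/\ell$. *)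

theory Defs
  imports "Berlekamp_Zassenhaus.Finite_Field"
begin

definition nz_squares :: "'a::field set" where
  "nz_squares = {s. s \<noteq> 0 \<and> (\<exists>y. s = y ^ 2)}"

definition galois_prime :: "('a::field \<Rightarrow> 'a) set" where
  "galois_prime = {\<sigma>. bij \<sigma> \<and> (\<forall>x y. \<sigma> (x + y) = \<sigma> x + \<sigma> y) \<and>
       (\<forall>x y. \<sigma> (x * y) = \<sigma> x * \<sigma> y) \<and> \<sigma> 1 = 1 \<and> (\<forall>n::nat. \<sigma> (of_nat n) = of_nat n)}"

text \<open>Voltage assignment F_q^squares -> Z/l (values off the squares are irrelevant).\<close>
definition voltage_assignment :: "('a::field \<Rightarrow> 'l::prime_card mod_ring) \<Rightarrow> bool" where
  "voltage_assignment \<alpha> \<longleftrightarrow> (\<exists>s\<in>nz_squares. \<alpha> s \<noteq> 0) \<and> (\<forall>s\<in>nz_squares. \<alpha> (- s) = - \<alpha> s)"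

definition volt_adj :: "('a::field \<Rightarrow> 'l::prime_card mod_ring) \<Rightarrow> 'a \<times> 'l mod_ring \<Rightarrow> 'a \<times> 'l mod_ring \<Rightarrow> bool" where
  "volt_adj \<alpha> u v \<longleftrightarrow> fst v - fst u \<in> nz_squares \<and> snd v - snd u = \<alpha> (fst v - fst u)"

definition cover_iso :: "('a::field \<Rightarrow> 'l::prime_card mod_ring) \<Rightarrow> ('a \<Rightarrow> 'l mod_ring)
     \<Rightarrow> ('a \<times> 'l mod_ring \<Rightarrow> 'a \<times> 'l mod_ring) \<Rightarrow> bool" where
  "cover_iso \<alpha> \<beta> f \<longleftrightarrow> bij f \<and> (\<forall>u v. volt_adj \<alpha> u v \<longleftrightarrow> volt_adj \<beta> (f u) (f v)) \<and>
     (\<forall>x i j. f (x, i + j) = (fst (f (x, i)), snd (f (x, i)) + j))"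

end

theory Submission
  imports Defs
begin

text \<open>
  Writing \<open>f (x, i) = (G x, h x + i)\<close>, adjacency forces \<open>G\<close> to be an automorphism of the
  Paley graph, so by Carlitz's theorem \<open>G x = t x\<^sup>\<sigma> + a\<close>. Carlitz's argument: with
  \<open>q = p ^ n = 2 m + 1\<close>, Euler's criterion turns the hypothesis into
  \<open>(G x - G y) ^ m = (x - y) ^ m\<close>. Interpolating with this identity shows that, after normalising
  \<open>G 0 = 0\<close>, every power \<open>G ^ k\<close> with \<open>m choose k \<noteq> 0\<close> mod \<open>p\<close> is a polynomial
  of degree \<open>\<le> m\<close>. By Lucas' theorem this applies to all products of the Frobenius twists
  \<open>G ^ p ^ i\<close> with at most \<open>(p - 1) / 2\<close> factors of each kind; the full product is
  \<open>G ^ m = x ^ m\<close>, so the degrees of the \<open>G ^ p ^ i\<close> add up to \<open>1 + p + \<dots> + p ^ (n - 1)\<close>.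
  Since raising to \<open>p ^ i\<close> rotates base-\<open>p\<close> digits of exponents, this forces every exponent
  occurring in \<open>G\<close> to be a single power \<open>p ^ j\<close>.

  The voltage condition then says that \<open>h (x + s) - h x\<close> does not depend on \<open>x\<close> for squares
  \<open>s\<close>. As every element is a difference of two squares, \<open>h - h 0\<close> is an additive map from
  characteristic \<open>p\<close> into \<open>\<int>/\<ell>\<close>, hence zero because \<open>\<ell> \<noteq> p\<close>; this yields both the
  constant shift \<open>k\<close> and the relation \<open>\<alpha> s = \<beta> (t s\<^sup>\<sigma>)\<close>.
\<close>


section \<open>Finite fields\<close>

lemma prime_CHAR_finite_field: "prime CHAR('a::{field,finite})"
  by (intro prime_CHAR_semidom finite_imp_CHAR_pos) auto

lemma power_card_minus_one_eq_1:
  fixes x :: "'a::{field,finite}"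
  assumes "x \<noteq> 0"
  shows "x ^ (CARD('a) - 1) = 1"
proof -
  let ?U = "UNIV - {0::'a}"
  have "x ^ card ?U * \<Prod>?U = (\<Prod>y\<in>?U. x * y)"
    by (simp add: prod.distrib)
  also have "\<dots> = \<Prod>?U"
    by (rule prod.reindex_bij_witness[of _ "\<lambda>y. y / x" "\<lambda>y. x * y"]) (use assms in auto)
  finally have "x ^ card ?U = 1"
    by simp
  then show ?thesis
    by (simp add: card_Diff_singleton)
qed

lemma power_card_eq_self: "(x::'a::{field,finite}) ^ CARD('a) = x"
proof (cases "x = 0")
  case False
  have "x ^ CARD('a) = x * x ^ (CARD('a) - 1)"
    by (simp flip: power_Suc)
  with power_card_minus_one_eq_1[OF False] show ?thesis
    by simp
qed simp

lemma of_nat_mult_mem_additive: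
  fixes H :: "'a::semiring_1 set"
  assumes "0 \<in> H" "\<And>y z. y \<in> H \<Longrightarrow> z \<in> H \<Longrightarrow> y + z \<in> H" "h \<in> H"
  shows "of_nat k * h \<in> H"
  by (induction k) (use assms in \<open>auto simp: distrib_right\<close>)

lemma uminus_mem_additive:
  fixes H :: "'a::{field,finite} set"
  assumes "0 \<in> H" "\<And>y z. y \<in> H \<Longrightarrow> z \<in> H \<Longrightarrow> y + z \<in> H" "h \<in> H"
  shows "- h \<in> H"
proof -
  have "CHAR('a) > 0"
    using prime_CHAR_finite_field[where 'a='a] prime_gt_0_nat by blast
  then have "(of_nat (CHAR('a) - 1) :: 'a) = - 1"
    by simp
  then show ?thesis
    using of_nat_mult_mem_additive[OF assms, of "CHAR('a) - 1"] by simp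
qed

lemma mem_additive_of_of_nat_mult_mem:
  fixes H :: "'a::{field,finite} set"
  assumes "0 \<in> H" "\<And>y z. y \<in> H \<Longrightarrow> z \<in> H \<Longrightarrow> y + z \<in> H"
    and "of_nat j * x \<in> H" "\<not> CHAR('a) dvd j"
  shows "x \<in> H"
proof -
  have "coprime j CHAR('a)"
    using assms(4) prime_CHAR_finite_field[where 'a='a] by (metis coprime_commute prime_imp_coprime)
  then obtain u where "[j * u = 1] (mod CHAR('a))"
    using cong_solve_coprime_nat by auto
  then have "(of_nat u * of_nat j :: 'a) = 1"
    by (metis mult.commute of_nat_1 of_nat_eq_iff_cong_CHAR of_nat_mult)
  then have "x = of_nat u * (of_nat j * x)"
    by (simp flip: mult.assoc)
  then show ?thesis
    using of_nat_mult_mem_additive[OF assms(1,2,3)] by metis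
qed

definition adjoin_additive :: "'a::semiring_1 \<Rightarrow> 'a set \<Rightarrow> 'a set" where
  "adjoin_additive x H = {h + of_nat j * x |h j. h \<in> H}"

lemma adjoin_additive_closed:
  fixes H :: "'a::semiring_1 set"
  assumes "0 \<in> H" and add: "\<And>y z. y \<in> H \<Longrightarrow> z \<in> H \<Longrightarrow> y + z \<in> H"
  shows "0 \<in> adjoin_additive x H"
    and "\<And>y z. y \<in> adjoin_additive x H \<Longrightarrow> z \<in> adjoin_additive x H \<Longrightarrow> y + z \<in> adjoin_additive x H"
proof -
  have "0 = 0 + of_nat 0 * x"
    by simp
  with \<open>0 \<in> H\<close> show "0 \<in> adjoin_additive x H"
    unfolding adjoin_additive_def by blast
next
  fix y z
  assume "y \<in> adjoin_additive x H" "z \<in> adjoin_additive x H"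
  then obtain h1 j1 h2 j2 where "h1 \<in> H" "h2 \<in> H" "y = h1 + of_nat j1 * x" "z = h2 + of_nat j2 * x"
    unfolding adjoin_additive_def by blast
  then have "h1 + h2 \<in> H" "y + z = (h1 + h2) + of_nat (j1 + j2) * x"
    by (auto intro: add simp: algebra_simps)
  then show "y + z \<in> adjoin_additive x H"
    unfolding adjoin_additive_def by blast
qed

lemma subset_adjoin_additive:
  fixes H :: "'a::semiring_1 set"
  assumes "0 \<in> H"
  shows "insert x H \<subseteq> adjoin_additive x H"
proof -
  have "h = h + of_nat 0 * x" "x = 0 + of_nat 1 * x" for h
    by simp_all
  with assms show ?thesis
    unfolding adjoin_additive_def by blast
qed

lemma of_nat_mult_coset_inj:
  fixes H :: "'a::{field,finite} set"
  assumes zero: "0 \<in> H" and add: "\<And>y z. y \<in> H \<Longrightarrow> z \<in> H \<Longrightarrow> y + z \<in> H" and "x \<notin> H"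
    and "h1 \<in> H" "h2 \<in> H" "j1 \<le> j2" "j2 < CHAR('a)"
    and eq: "h1 + of_nat j1 * x = h2 + of_nat j2 * x"
  shows "j1 = j2"
proof (rule ccontr)
  assume "j1 \<noteq> j2"
  with assms have "\<not> CHAR('a) dvd (j2 - j1)"
    by (auto dest: dvd_imp_le)
  have "of_nat (j2 - j1) * x = h1 + - h2"
    using assms by (simp add: algebra_simps)
  also have "\<dots> \<in> H"
    using assms by (intro add uminus_mem_additive[OF zero add])
  finally have "x \<in> H"
    using mem_additive_of_of_nat_mult_mem[OF zero add] \<open>\<not> CHAR('a) dvd (j2 - j1)\<close> by blast
  with \<open>x \<notin> H\<close> show False ..
qed

lemma card_adjoin_additive:
  fixes H :: "'a::{field,finite} set"
  assumes zero: "0 \<in> H" and add: "\<And>y z. y \<in> H \<Longrightarrow> z \<in> H \<Longrightarrow> y + z \<in> H" and "x \<notin> H"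
  shows "card (adjoin_additive x H) = card H * CHAR('a)"
proof -
  let ?p = "CHAR('a)" and ?f = "\<lambda>(h, j). h + of_nat j * x"
  have "?p > 0"
    using prime_CHAR_finite_field[where 'a='a] prime_gt_0_nat by blast
  have "adjoin_additive x H = ?f ` (H \<times> {..<?p})"
  proof (intro equalityI subsetI)
    fix y assume "y \<in> adjoin_additive x H"
    then obtain h j where "h \<in> H" "y = h + of_nat j * x"
      unfolding adjoin_additive_def by blast
    then have "y = ?f (h, j mod ?p)" and "(h, j mod ?p) \<in> H \<times> {..<?p}"
      using \<open>?p > 0\<close> by simp_all
    then show "y \<in> ?f ` (H \<times> {..<?p})"
      by (rule image_eqI)
  qed (auto simp: adjoin_additive_def)
  moreover have "inj_on ?f (H \<times> {..<?p})"
  proof (rule inj_onI)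
    fix u v assume "u \<in> H \<times> {..<?p}" "v \<in> H \<times> {..<?p}" and eq: "?f u = ?f v"
    then obtain h1 j1 h2 j2 where uv: "u = (h1, j1)" "v = (h2, j2)"
      and "h1 \<in> H" "h2 \<in> H" "j1 < ?p" "j2 < ?p"
      by auto
    with eq have "j1 = j2"
      using of_nat_mult_coset_inj[OF zero add \<open>x \<notin> H\<close>, of h1 h2 j1 j2]
        of_nat_mult_coset_inj[OF zero add \<open>x \<notin> H\<close>, of h2 h1 j2 j1]
      by (cases "j1 \<le> j2") auto
    with eq uv show "u = v"
      by simp
  qed
  ultimately show ?thesis
    by (simp add: card_image card_cartesian_product)
qed

lemma CARD_eq_CHAR_power: "\<exists>n. CARD('a::{field,finite}) = CHAR('a) ^ n"
proof -
  have "\<exists>n. CARD('a) = CHAR('a) ^ n"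
    if "0 \<in> H" "\<And>y z. y \<in> H \<Longrightarrow> z \<in> H \<Longrightarrow> y + z \<in> H" "card H = CHAR('a) ^ k"
    for H :: "'a set" and k
    using that
  proof (induction "CARD('a) - card H" arbitrary: H k rule: less_induct)
    case less
    show ?case
    proof (cases "H = UNIV")
      case True
      with less.prems show ?thesis by auto
    next
      case False
      then obtain x where "x \<notin> H" by auto
      let ?H' = "adjoin_additive x H"
      have "H \<subset> ?H'"
        using subset_adjoin_additive[OF less.prems(1), of x] \<open>x \<notin> H\<close> by blast
      then have "card H < card ?H'"
        by (intro psubset_card_mono) simp
      moreover have "card ?H' \<le> CARD('a)"
        by (rule card_mono) auto
      ultimately have "CARD('a) - card ?H' < CARD('a) - card H"
        by linarith
      moreover note adjoin_additive_closed[OF less.prems(1,2)]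
      moreover have "card ?H' = CHAR('a) ^ Suc k"
        using card_adjoin_additive[OF less.prems(1,2) \<open>x \<notin> H\<close>] less.prems(3) by simp
      ultimately show ?thesis
        by (rule less.hyps)
    qed
  qed
  from this[of "{0}" 0] show ?thesis
    by simp
qed

lemma CARD_ge_2: "2 \<le> CARD('a::{field,finite})"
proof -
  have "card {0::'a, 1} \<le> CARD('a)"
    by (rule card_mono) auto
  then show ?thesis
    by simp
qed

lemma of_nat_CARD_eq_0: "(of_nat CARD('a::{field,finite}) :: 'a) = 0"
proof -
  obtain n where n: "CARD('a) = CHAR('a) ^ n"
    using CARD_eq_CHAR_power by blast
  have "n \<noteq> 0"
  proof
    assume "n = 0"
    with n CARD_ge_2[where 'a='a] show False
      by simp
  qed
  then have "CHAR('a) dvd CARD('a)"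
    unfolding n by simp
  then show ?thesis
    by (simp only: of_nat_eq_0_iff_char_dvd)
qed

lemma poly_eqI_finite_field:
  fixes P Q :: "'a::{field,finite} poly"
  assumes "degree P < CARD('a)" "degree Q < CARD('a)" "\<And>x. poly P x = poly Q x"
  shows "P = Q"
  using assms by (intro poly_eqI_degree[of UNIV]) auto

lemma exists_power_ne_1:
  assumes "\<not> (CARD('a::{field,finite}) - 1) dvd e"
  shows "\<exists>a::'a. a \<noteq> 0 \<and> a ^ e \<noteq> 1"
proof (rule ccontr)
  assume "\<not> ?thesis"
  then have all: "a ^ e = 1" if "a \<noteq> 0" for a :: 'a
    using that by blast
  define e' where "e' = e mod (CARD('a) - 1)"
  define P where "P = monom (1::'a) e' - 1"
  have "e' < CARD('a) - 1"
    using CARD_ge_2[where 'a='a] by (simp add: e'_def)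
  have "e' \<noteq> 0"
    using assms by (simp add: e'_def mod_eq_0_iff_dvd)
  have "a ^ e' = 1" if "a \<noteq> 0" for a :: 'a
  proof -
    have "a ^ e = (a ^ (CARD('a) - 1)) ^ (e div (CARD('a) - 1)) * a ^ e'"
      by (simp add: e'_def flip: power_mult power_add)
    with all[OF that] power_card_minus_one_eq_1[OF that] show ?thesis
      by simp
  qed
  then have "UNIV - {0} \<subseteq> {a. poly P a = 0}"
    by (auto simp: P_def poly_monom)
  then have "card (UNIV - {0::'a}) \<le> card {a. poly P a = 0}"
    by (intro card_mono) simp_all
  also have "\<dots> \<le> degree P"
  proof (rule card_poly_roots_bound)
    have "coeff P e' = 1"
      using \<open>e' \<noteq> 0\<close> by (simp add: P_def)
    then show "P \<noteq> 0"
      by auto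
  qed
  also have "degree P \<le> e'"
    unfolding P_def by (intro degree_diff_le degree_monom_le) simp
  finally show False
    using \<open>e' < CARD('a) - 1\<close> by (simp add: card_Diff_singleton)
qed

lemma sum_UNIV_power:
  "(\<Sum>z\<in>UNIV. (z::'a::{field,finite}) ^ e) = (if e \<noteq> 0 \<and> (CARD('a) - 1) dvd e then -1 else 0)"
proof -
  consider "e = 0" | "e \<noteq> 0" "(CARD('a) - 1) dvd e" | "\<not> (CARD('a) - 1) dvd e"
    by auto
  then show ?thesis
  proof cases
    case 1
    then show ?thesis
      by (simp add: of_nat_CARD_eq_0)
  next
    case 2
    then obtain u where u: "e = (CARD('a) - 1) * u"
      by blast
    have "z ^ e = 1" if "z \<noteq> 0" for z :: 'a
      using power_card_minus_one_eq_1[OF that] by (simp add: u power_mult)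
    then have "(\<Sum>z\<in>UNIV. (z::'a) ^ e) = (\<Sum>z\<in>UNIV. 1 - (if (z::'a) = 0 then 1 else 0))"
      using 2 by (intro sum.cong refl) auto
    also have "\<dots> = -1"
      by (simp add: sum_subtractf of_nat_CARD_eq_0)
    finally show ?thesis
      using 2 by simp
  next
    case 3
    then obtain a :: 'a where a: "a \<noteq> 0" "a ^ e \<noteq> 1"
      using exists_power_ne_1 by blast
    have "(\<Sum>z\<in>UNIV. z ^ e) = (\<Sum>z\<in>UNIV. (a * z) ^ e)"
      by (rule sum.reindex_bij_witness[of _ "\<lambda>z. a * z" "\<lambda>z. z / a"]) (use a in auto)
    also have "\<dots> = a ^ e * (\<Sum>z\<in>UNIV. z ^ e)"
      by (simp add: power_mult_distrib sum_distrib_left)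
    finally have "(1 - a ^ e) * (\<Sum>z\<in>UNIV. z ^ e) = 0"
      by (simp add: algebra_simps)
    with a 3 show ?thesis
      by simp
  qed
qed


section \<open>Frobenius, Galois automorphisms and squares\<close>

lemma frobenius_add:
  fixes x y :: "'a::{field,finite}"
  shows "(x + y) ^ (CHAR('a) ^ i) = x ^ (CHAR('a) ^ i) + y ^ (CHAR('a) ^ i)"
  by (rule freshmans_dream'[OF prime_CHAR_finite_field refl])

lemma frobenius_sum:
  fixes f :: "'b \<Rightarrow> 'a::{field,finite}"
  shows "sum f A ^ (CHAR('a) ^ i) = (\<Sum>a\<in>A. f a ^ (CHAR('a) ^ i))"
  by (rule freshmans_dream_sum'[OF prime_CHAR_finite_field refl])

lemma inj_frobenius: "inj (\<lambda>x::'a::{field,finite}. x ^ (CHAR('a) ^ i))"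
proof (rule injI)
  fix x y :: 'a
  assume "x ^ (CHAR('a) ^ i) = y ^ (CHAR('a) ^ i)"
  then have "(x - y) ^ (CHAR('a) ^ i) = 0"
    using frobenius_add[of "x - y" y i] by simp
  then show "x = y"
    by simp
qed

lemma frobenius_of_nat: "(of_nat k :: 'a::{field,finite}) ^ (CHAR('a) ^ i) = of_nat k"
proof (induction k)
  case 0
  have "CHAR('a) \<noteq> 0"
    using prime_CHAR_finite_field[where 'a='a] by (metis not_prime_0)
  then show ?case
    by simp
next
  case (Suc k)
  then show ?case
    using frobenius_add[of 1 "of_nat k :: 'a" i] by simp
qed

lemma frobenius_in_galois_prime: "(\<lambda>x::'a::{field,finite}. x ^ (CHAR('a) ^ i)) \<in> galois_prime"
proof -
  have "bij (\<lambda>x::'a. x ^ (CHAR('a) ^ i))"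
    using inj_frobenius[where 'a='a] finite_UNIV_inj_surj[of "\<lambda>x::'a. x ^ (CHAR('a) ^ i)"] by (simp add: bij_def)
  then show ?thesis
    unfolding galois_prime_def by (simp add: frobenius_add power_mult_distrib frobenius_of_nat)
qed

lemma galois_primeD:
  assumes "\<sigma> \<in> galois_prime"
  shows "inj \<sigma>" and "\<sigma> (x + y) = \<sigma> x + \<sigma> y" and "\<sigma> (x * y) = \<sigma> x * \<sigma> y"
    and "\<sigma> (x - y) = \<sigma> x - \<sigma> y" and "\<sigma> 0 = 0"
proof -
  show "inj \<sigma>" "\<sigma> (x * y) = \<sigma> x * \<sigma> y"
    using assms by (auto simp: galois_prime_def bij_def)
  have add: "\<sigma> (u + v) = \<sigma> u + \<sigma> v" for u v
    using assms by (simp add: galois_prime_def)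
  then show "\<sigma> (x + y) = \<sigma> x + \<sigma> y" .
  show "\<sigma> (x - y) = \<sigma> x - \<sigma> y"
    using add[of "x - y" y] by (simp add: algebra_simps)
  show "\<sigma> 0 = 0"
    using add[of 0 0] by (simp only: add_0_left add_cancel_right_right)
qed

lemma nz_squares_iff: "s \<in> nz_squares \<longleftrightarrow> (\<exists>y. y \<noteq> 0 \<and> s = y ^ 2)"
  by (auto simp: nz_squares_def)

lemma nz_squares_mult_iff:
  fixes t x :: "'a::field"
  assumes "t \<in> nz_squares"
  shows "t * x \<in> nz_squares \<longleftrightarrow> x \<in> nz_squares"
proof -
  obtain y where y: "t = y ^ 2" "y \<noteq> 0"
    using assms unfolding nz_squares_iff by blast
  have "t * x = (y * z) ^ 2 \<longleftrightarrow> x = z ^ 2" for z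
    using y by (auto simp: power_mult_distrib)
  moreover have "x = (z / y) ^ 2 \<longleftrightarrow> t * x = z ^ 2" for z
    using y by (auto simp: field_simps)
  ultimately show ?thesis
    using y unfolding nz_squares_def by auto
qed

lemma eq_diff_squares:
  fixes y :: "'a::field"
  assumes "(2::'a) \<noteq> 0"
  shows "y = ((y + 1) / 2) ^ 2 - ((y - 1) / 2) ^ 2"
proof -
  have "((y + 1) / 2) ^ 2 - ((y - 1) / 2) ^ 2 = ((y + 1) ^ 2 - (y - 1) ^ 2) / 2 ^ 2"
    by (simp only: power_divide diff_divide_distrib[symmetric])
  also have "(y + 1) ^ 2 - (y - 1) ^ 2 = 2 ^ 2 * y"
    by (simp add: power2_eq_square algebra_simps)
  also have "2 ^ 2 * y / 2 ^ 2 = y"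
    using assms by (intro nonzero_mult_div_cancel_left power_not_zero)
  finally show ?thesis
    by (rule sym)
qed

lemma galois_prime_nz_squares_iff:
  assumes "\<sigma> \<in> galois_prime"
  shows "\<sigma> x \<in> nz_squares \<longleftrightarrow> x \<in> nz_squares"
proof -
  have surj: "surj \<sigma>"
    using assms by (simp add: galois_prime_def bij_def)
  have sq: "\<sigma> (y ^ 2) = \<sigma> y ^ 2" for y
    by (simp add: power2_eq_square galois_primeD(3)[OF assms])
  have "(\<exists>z. \<sigma> x = z ^ 2) \<longleftrightarrow> (\<exists>y. x = y ^ 2)"
  proof
    assume "\<exists>z. \<sigma> x = z ^ 2"
    then obtain y where "\<sigma> x = \<sigma> y ^ 2"
      using surj by (metis surjD)
    then have "\<sigma> x = \<sigma> (y ^ 2)"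
      by (simp add: sq)
    then show "\<exists>y. x = y ^ 2"
      using galois_primeD(1)[OF assms] by (auto dest: injD)
  qed (auto simp: sq)
  moreover have "\<sigma> x = 0 \<longleftrightarrow> x = 0"
    using galois_primeD(1,5)[OF assms] by (metis injD)
  ultimately show ?thesis
    by (simp add: nz_squares_def)
qed

lemma two_neq_zero_if_odd_card:
  assumes "odd CARD('a::{field,finite})"
  shows "(2::'a) \<noteq> 0"
proof
  assume "(2::'a) = 0"
  then have "CHAR('a) dvd 2"
    by (metis of_nat_eq_0_iff_char_dvd of_nat_numeral)
  then have "CHAR('a) = 2"
    using primes_dvd_imp_eq[OF prime_CHAR_finite_field[where 'a='a] two_is_prime_nat] by simp
  moreover have "CHAR('a) dvd CARD('a)"
    using of_nat_CARD_eq_0[where 'a='a] by (simp only: of_nat_eq_0_iff_char_dvd)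
  ultimately show False
    using assms by simp
qed

lemma card_nz_squares:
  assumes "odd CARD('a::{field,finite})"
  shows "2 * card (nz_squares :: 'a set) = CARD('a) - 1"
proof -
  let ?S = "nz_squares :: 'a set"
  have roots: "card {y::'a. y ^ 2 = s} = 2" if s: "s \<in> ?S" for s
  proof -
    obtain z where z: "s = z ^ 2" "z \<noteq> 0"
      using s unfolding nz_squares_iff by blast
    then have "{y. y ^ 2 = s} = {z, -z}"
      by (auto simp: power2_eq_iff)
    moreover have "z \<noteq> -z"
    proof
      assume "z = -z"
      then have "2 * z = 0"
        by (metis add.right_inverse mult_2)
      with z two_neq_zero_if_odd_card[OF assms] show False
        by simp
    qed
    ultimately show ?thesis
      by simp
  qed
  have "UNIV - {0} = (\<Union>s\<in>?S. {y. y ^ 2 = s})"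
    by (auto simp: nz_squares_def)
  then have "card (UNIV - {0::'a}) = (\<Sum>s\<in>?S. card {y::'a. y ^ 2 = s})"
    by (simp only:) (rule card_UN_disjoint; auto)
  also have "\<dots> = 2 * card ?S"
    using roots by simp
  finally show ?thesis
    by (simp add: card_Diff_singleton)
qed

lemma power_half_card_eq_1_if_nz_squares:
  fixes s :: "'a::{field,finite}"
  assumes "CARD('a) = 2 * m + 1" and "s \<in> nz_squares"
  shows "s ^ m = 1"
proof -
  obtain y where "s = y ^ 2" "y \<noteq> 0"
    using assms(2) unfolding nz_squares_iff by blast
  moreover have "y ^ (CARD('a) - 1) = (y ^ 2) ^ m"
    using assms(1) by (simp add: power_mult)
  ultimately show ?thesis
    using power_card_minus_one_eq_1[of y] by simp
qed

lemma nz_squares_if_power_half_card_eq_1: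
  fixes z :: "'a::{field,finite}"
  assumes card: "CARD('a) = 2 * m + 1" and "z ^ m = 1"
  shows "z \<in> nz_squares"
proof -
  define P where "P = monom (1::'a) m - 1"
  have "m \<noteq> 0"
    using card CARD_ge_2[where 'a='a] by auto
  then have "coeff P m = 1"
    by (simp add: P_def)
  then have "P \<noteq> 0"
    by auto
  have sub: "nz_squares \<subseteq> {x. poly P x = 0}"
    using power_half_card_eq_1_if_nz_squares[OF card] by (auto simp: P_def poly_monom)
  have "card {x. poly P x = 0} \<le> degree P"
    by (rule card_poly_roots_bound[OF \<open>P \<noteq> 0\<close>])
  also have "degree P \<le> m"
    unfolding P_def by (intro degree_diff_le degree_monom_le) simp
  also have "m = card (nz_squares :: 'a set)"
    using card_nz_squares[where 'a='a] card by simp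
  finally have "card {x. poly P x = 0} \<le> card (nz_squares :: 'a set)" .
  moreover have "card (nz_squares :: 'a set) \<le> card {x. poly P x = 0}"
    using sub by (intro card_mono) simp_all
  ultimately have "nz_squares = {x. poly P x = 0}"
    using sub by (intro card_subset_eq) simp_all
  moreover have "poly P z = 0"
    using assms(2) by (simp add: P_def poly_monom)
  ultimately show ?thesis
    by blast
qed

lemma euler_criterion:
  fixes z :: "'a::{field,finite}"
  assumes card: "CARD('a) = 2 * m + 1" and "z \<noteq> 0"
  shows "z ^ m = (if z \<in> nz_squares then 1 else -1)"
proof -
  have "z ^ (CARD('a) - 1) = (z ^ 2) ^ m"
    using card by (simp add: power_mult)
  also have "\<dots> = (z ^ m) ^ 2"
    by (simp only: power_mult[symmetric] mult.commute)
  finally have "(z ^ m) ^ 2 = 1"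
    using power_card_minus_one_eq_1[OF \<open>z \<noteq> 0\<close>] by simp
  then have "z ^ m = 1 \<or> z ^ m = -1"
    by (simp add: power2_eq_1_iff)
  then show ?thesis
    using power_half_card_eq_1_if_nz_squares[OF card] nz_squares_if_power_half_card_eq_1[OF card]
    by (cases "z \<in> nz_squares") auto
qed


section \<open>Binomial coefficients and base-\<open>p\<close> digits\<close>

lemma coeff_one_plus_X_power: "coeff ([:1, 1:] ^ N :: 'a::comm_semiring_1 poly) k = of_nat (N choose k)"
proof (cases "k \<le> N")
  case True
  then show ?thesis
    by (simp add: coeff_linear_poly_power)
next
  case False
  have "degree ([:1, 1:] ^ N :: 'a poly) \<le> N"
    using degree_power_le[of "[:1, 1:] :: 'a poly" N] by simp
  with False show ?thesis
    by (simp add: coeff_eq_0 binomial_eq_0)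
qed

lemma one_plus_X_power_add_mult_CHAR:
  assumes "prime CHAR('a::field)"
  shows "([:1, 1:] :: 'a poly) ^ (a + CHAR('a) * b)
           = (\<Sum>i\<le>a. \<Sum>v\<le>b. monom (of_nat (a choose i) * of_nat (b choose v)) (i + CHAR('a) * v))"
proof -
  let ?p = "CHAR('a)" and ?X = "[:1, 1:] :: 'a poly"
  have "?X = monom 1 1 + 1"
    by (simp add: one_pCons monom_Suc monom_0)
  then have "?X ^ ?p = monom 1 1 ^ ?p + 1 ^ ?p"
    using assms by (simp add: freshmans_dream)
  then have frobenius: "?X ^ ?p = monom 1 ?p + 1"
    by (simp add: monom_power)
  have "?X ^ a = (\<Sum>i\<le>a. monom (of_nat (a choose i)) i)"
    by (rule poly_eqI) (simp add: coeff_one_plus_X_power coeff_sum binomial_eq_0 not_le)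
  moreover have "(monom 1 ?p + 1) ^ b = (\<Sum>v\<le>b. monom (of_nat (b choose v)) (?p * v) :: 'a poly)"
    by (subst binomial_ring) (simp add: monom_power mult.commute smult_monom of_nat_poly)
  moreover have "?X ^ (a + ?p * b) = ?X ^ a * (?X ^ ?p) ^ b"
    by (simp add: power_add power_mult)
  ultimately show ?thesis
    unfolding frobenius by (simp add: sum_distrib_left sum_distrib_right mult_monom) (rule sum.swap)
qed

lemma sum_sum_delta:
  fixes F :: "nat \<Rightarrow> nat \<Rightarrow> 'b::comm_monoid_add"
  shows "(\<Sum>i\<le>a. \<Sum>v\<le>b. if i = s \<and> v = t then F i v else 0) = (if s \<le> a \<and> t \<le> b then F s t else 0)"
proof -
  have "(\<Sum>v\<le>b. if i = s \<and> v = t then F i v else 0) = (if i = s then if t \<le> b then F i t else 0 else 0)" for i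
    by (cases "i = s") simp_all
  then show ?thesis
    by (cases "t \<le> b") simp_all
qed

lemma of_nat_choose_add_mult_CHAR:
  fixes a b s t :: nat
  assumes p: "prime CHAR('a::field)" and a: "a < CHAR('a)" and s: "s < CHAR('a)"
  shows "(of_nat ((a + CHAR('a) * b) choose (s + CHAR('a) * t)) :: 'a)
           = of_nat (a choose s) * of_nat (b choose t)"
proof -
  let ?p = "CHAR('a)"
  have exponent_eq: "i + ?p * v = s + ?p * t \<longleftrightarrow> i = s \<and> v = t" if "i \<le> a" for i v
  proof
    assume eq: "i + ?p * v = s + ?p * t"
    then have "(i + ?p * v) mod ?p = (s + ?p * t) mod ?p"
      by simp
    then have "i = s"
      using that a s by simp
    with eq p show "i = s \<and> v = t"
      by (simp add: prime_gt_0_nat)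
  qed auto
  have "(of_nat ((a + ?p * b) choose (s + ?p * t)) :: 'a) = coeff ([:1, 1:] ^ (a + ?p * b)) (s + ?p * t)"
    by (simp add: coeff_one_plus_X_power)
  also have "\<dots> = (\<Sum>i\<le>a. \<Sum>v\<le>b. if i = s \<and> v = t then of_nat (a choose i) * of_nat (b choose v) else 0)"
    unfolding one_plus_X_power_add_mult_CHAR[OF p] coeff_sum coeff_monom
    by (intro sum.cong refl) (use exponent_eq in auto)
  also have "\<dots> = of_nat (a choose s) * of_nat (b choose t)"
    by (auto simp: sum_sum_delta binomial_eq_0 not_le)
  finally show ?thesis .
qed

lemma prime_not_dvd_choose:
  assumes "prime p" "c < p" "k \<le> c"
  shows "\<not> p dvd (c choose k)"
proof
  assume "p dvd (c choose k)"
  then have "p dvd fact k * fact (c - k) * (c choose k)"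
    by simp
  then have "p dvd fact c"
    using binomial_fact_lemma[OF assms(3)] by simp
  with assms show False
    by (simp add: prime_dvd_fact_iff)
qed

text \<open>One direction of Lucas' theorem.\<close>
lemma of_nat_choose_digits_neq_0:
  fixes a s :: "nat \<Rightarrow> nat"
  assumes p: "prime CHAR('a::field)" and "\<And>j. j < n \<Longrightarrow> s j \<le> a j \<and> a j < CHAR('a)"
  shows "(of_nat ((\<Sum>j<n. a j * CHAR('a) ^ j) choose (\<Sum>j<n. s j * CHAR('a) ^ j)) :: 'a) \<noteq> 0"
  using assms(2)
proof (induction n arbitrary: a s)
  case 0
  then show ?case
    by simp
next
  case (Suc n)
  let ?p = "CHAR('a)"
  have split: "(\<Sum>j<Suc n. f j * ?p ^ j) = f 0 + ?p * (\<Sum>j<n. f (Suc j) * ?p ^ j)" for f :: "nat \<Rightarrow> nat"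
    by (simp only: sum.lessThan_Suc_shift) (simp add: sum_distrib_left mult_ac)
  have "\<not> ?p dvd (a 0 choose s 0)"
    using Suc.prems[of 0] p by (intro prime_not_dvd_choose) auto
  then have "(of_nat (a 0 choose s 0) :: 'a) \<noteq> 0"
    by (simp add: of_nat_eq_0_iff_char_dvd)
  moreover have "(of_nat ((\<Sum>j<n. a (Suc j) * ?p ^ j) choose (\<Sum>j<n. s (Suc j) * ?p ^ j)) :: 'a) \<noteq> 0"
    using Suc.prems by (intro Suc.IH) auto
  ultimately show ?case
    unfolding split[of a] split[of s] using Suc.prems[of 0]
    by (simp add: of_nat_choose_add_mult_CHAR[OF p])
qed

definition digit :: "nat \<Rightarrow> nat \<Rightarrow> nat \<Rightarrow> nat" where
  "digit p j r = r div p ^ j mod p"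

lemma sum_digits: "(\<Sum>j<n. digit p j r * p ^ j) = r mod p ^ n"
proof (induction n)
  case (Suc n)
  have "r mod p ^ Suc n = p ^ n * (r div p ^ n mod p) + r mod p ^ n"
    by (simp only: power_Suc2 mod_mult2_eq)
  with Suc show ?case
    by (simp add: digit_def algebra_simps)
qed simp

text \<open>For \<open>r < p ^ n\<close>, the exponent obtained by rotating the \<open>n\<close> base-\<open>p\<close> digits
  of \<open>r\<close> cyclically by \<open>i\<close> places: in a field with \<open>p ^ n\<close> elements,
  \<open>(x ^ r) ^ p ^ i = x ^ rotate_digits p n i r\<close>.\<close>
definition rotate_digits :: "nat \<Rightarrow> nat \<Rightarrow> nat \<Rightarrow> nat \<Rightarrow> nat" where
  "rotate_digits p n i r = (\<Sum>j<n. digit p j r * p ^ ((j + i) mod n))"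

lemma sum_lessThan_rotate:
  fixes n i :: nat
  shows "(\<Sum>j<n. f ((j + i) mod n)) = (\<Sum>j<n. f j)"
proof (cases "n = 0")
  case False
  have "inj_on (\<lambda>j. (j + i) mod n) {..<n}"
  proof (rule inj_onI)
    fix j k assume "j \<in> {..<n}" "k \<in> {..<n}" "(j + i) mod n = (k + i) mod n"
    then show "j = k"
      by (metis cong_add_rcancel_nat cong_def cong_less_modulus_unique_nat lessThan_iff)
  qed
  moreover from False have "(\<lambda>j. (j + i) mod n) ` {..<n} \<subseteq> {..<n}"
    by auto
  ultimately have "bij_betw (\<lambda>j. (j + i) mod n) {..<n} {..<n}"
    by (simp add: bij_betw_def endo_inj_surj)
  then show ?thesis
    by (rule sum.reindex_bij_betw)
qed simp

lemma geometric_sum_nat: "(p - 1) * (\<Sum>j<n. p ^ j) = p ^ n - (1::nat)"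
proof (cases "p = 0")
  case False
  then show ?thesis
    by (induction n) (auto simp: algebra_simps Suc_le_eq)
qed (simp add: power_0_left)

lemma rotate_digits_0:
  assumes "r < p ^ n"
  shows "rotate_digits p n 0 r = r"
proof -
  have "rotate_digits p n 0 r = (\<Sum>j<n. digit p j r * p ^ j)"
    unfolding rotate_digits_def by (intro sum.cong) auto
  with assms show ?thesis
    by (simp add: sum_digits)
qed

lemma rotate_digits_less:
  assumes "1 < p"
  shows "rotate_digits p n i r < p ^ n"
proof -
  have "rotate_digits p n i r \<le> (\<Sum>j<n. (p - 1) * p ^ ((j + i) mod n))"
    unfolding rotate_digits_def
  proof (rule sum_mono, rule mult_right_mono)
    fix j
    have "digit p j r < p"
      using assms by (simp add: digit_def)
    then show "digit p j r \<le> p - 1"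
      by simp
  qed simp
  also have "\<dots> = (p - 1) * (\<Sum>j<n. p ^ ((j + i) mod n))"
    by (simp only: sum_distrib_left)
  also have "\<dots> = (p - 1) * (\<Sum>j<n. p ^ j)"
    using sum_lessThan_rotate[where f="\<lambda>j. p ^ j"] by simp
  also have "\<dots> < p ^ n"
    using assms geometric_sum_nat[of p n] by simp
  finally show ?thesis .
qed

lemma sum_rotate_digits: "(\<Sum>i<n. rotate_digits p n i r) = (\<Sum>j<n. digit p j r) * (\<Sum>j<n. p ^ j)"
proof -
  have "(\<Sum>i<n. rotate_digits p n i r) = (\<Sum>j<n. digit p j r * (\<Sum>i<n. p ^ ((i + j) mod n)))"
    unfolding rotate_digits_def by (subst sum.swap) (simp add: sum_distrib_left add.commute)
  then show ?thesis
    by (simp add: sum_lessThan_rotate[where f="\<lambda>j. p ^ j"] sum_distrib_right)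
qed

lemma eq_power_if_digit_sum_eq_1:
  assumes "r < p ^ n" and "(\<Sum>j<n. digit p j r) = 1"
  shows "\<exists>j<n. r = p ^ j"
proof -
  obtain j0 where j0: "j0 < n" "digit p j0 r = 1" and others: "\<forall>j\<in>{..<n} - {j0}. digit p j r = 0"
  proof -
    obtain j0 where "j0 < n" "digit p j0 r \<noteq> 0"
      using assms(2) by (metis lessThan_iff sum.neutral zero_neq_one)
    moreover from this have "digit p j0 r + (\<Sum>j\<in>{..<n} - {j0}. digit p j r) = 1"
      using assms(2) by (simp add: sum.remove)
    ultimately have "digit p j0 r = 1" "(\<Sum>j\<in>{..<n} - {j0}. digit p j r) = 0"
      by linarith+
    with \<open>j0 < n\<close> show ?thesis
      by (intro that[of j0]) simp_all
  qed
  have "r = (\<Sum>j<n. digit p j r * p ^ j)"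
    using assms(1) by (simp add: sum_digits)
  also have "\<dots> = digit p j0 r * p ^ j0 + (\<Sum>j\<in>{..<n} - {j0}. digit p j r * p ^ j)"
    using j0 by (simp add: sum.remove)
  also have "\<dots> = p ^ j0"
    using j0 others by simp
  finally show ?thesis
    using j0 by blast
qed

lemma power_CHAR_power_mod:
  fixes x :: "'a::{field,finite}"
  assumes "CARD('a) = CHAR('a) ^ n"
  shows "x ^ (CHAR('a) ^ a) = x ^ (CHAR('a) ^ (a mod n))"
proof -
  have "x ^ (CARD('a) ^ k) = x" for k
    by (induction k) (simp_all add: power_mult power_card_eq_self)
  moreover have "CHAR('a) ^ a = CARD('a) ^ (a div n) * CHAR('a) ^ (a mod n)"
    unfolding assms by (simp flip: power_mult power_add)
  ultimately show ?thesis
    by (simp add: power_mult)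
qed

lemma power_rotate_digits:
  fixes x :: "'a::{field,finite}"
  assumes card: "CARD('a) = CHAR('a) ^ n" and "r < CARD('a)"
  shows "(x ^ r) ^ (CHAR('a) ^ i) = x ^ rotate_digits CHAR('a) n i r"
proof -
  let ?p = "CHAR('a)"
  have power_digits: "x ^ (\<Sum>j<n. d j * ?p ^ e j) = (\<Prod>j<n. (x ^ ?p ^ e j) ^ d j)" for d e
    unfolding power_sum by (rule prod.cong[OF refl]) (metis mult.commute power_mult)
  have "(\<Sum>j<n. digit ?p j r * ?p ^ j) = r"
    using assms by (simp add: sum_digits)
  then have "r * ?p ^ i = (\<Sum>j<n. digit ?p j r * ?p ^ j) * ?p ^ i"
    by simp
  then have "r * ?p ^ i = (\<Sum>j<n. digit ?p j r * ?p ^ (j + i))"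
    by (simp add: sum_distrib_right power_add mult.assoc)
  then have "(x ^ r) ^ (?p ^ i) = (\<Prod>j<n. (x ^ ?p ^ (j + i)) ^ digit ?p j r)"
    by (simp add: power_digits flip: power_mult)
  also have "\<dots> = (\<Prod>j<n. (x ^ ?p ^ ((j + i) mod n)) ^ digit ?p j r)"
    by (simp only: power_CHAR_power_mod[OF card, of x "_ + i"])
  also have "\<dots> = x ^ rotate_digits ?p n i r"
    by (simp add: rotate_digits_def power_digits)
  finally show ?thesis .
qed

lemma rotate_digits_inj:
  assumes card: "CARD('a::{field,finite}) = CHAR('a) ^ n" and "r < CARD('a)" "r' < CARD('a)"
    and eq: "rotate_digits CHAR('a) n i r = rotate_digits CHAR('a) n i r'"
  shows "r = r'"
proof -
  have "(x ^ r) ^ (CHAR('a) ^ i) = (x ^ r') ^ (CHAR('a) ^ i)" for x :: 'a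
    using eq power_rotate_digits[OF card assms(2)] power_rotate_digits[OF card assms(3)] by simp
  then have "poly (monom 1 r) x = poly (monom (1::'a) r') x" for x
    using injD[OF inj_frobenius[where 'a='a, of i], of "x ^ r" "x ^ r'"] by (simp add: poly_monom)
  then have "monom (1::'a) r = monom 1 r'"
    using assms by (intro poly_eqI_finite_field) (simp_all add: degree_monom_eq)
  then show ?thesis
    by (simp add: monom_eq_iff')
qed


section \<open>Carlitz's theorem\<close>

lemma double_dvd_iff_eq:
  fixes m k l :: nat
  assumes "k \<le> m" "l \<le> m" "0 < m"
  shows "2 * m dvd m + k + (m - l) \<longleftrightarrow> l = k"
proof
  assume "2 * m dvd m + k + (m - l)"
  then obtain t where t: "m + k + (m - l) = 2 * m * t"
    by (elim dvdE)
  consider "t = 0" | "t = 1" | "t \<ge> 2"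
    by linarith
  then show "l = k"
  proof cases
    case 3
    then have "2 * m * 2 \<le> 2 * m * t"
      by (intro mult_le_mono2)
    with t assms show ?thesis
      by linarith
  qed (use t assms in auto)
qed (use assms in \<open>simp add: mult_2\<close>)

text \<open>The identity behind Carlitz's argument: summing against \<open>(u - z) ^ m\<close>
  extracts a single binomial coefficient, because only the exponent \<open>q - 1\<close>
  survives in a power sum over \<open>F_q\<close>.\<close>
lemma sum_power_mult_power_diff:
  fixes u :: "'a::{field,finite}"
  assumes card: "CARD('a) = 2 * m + 1" and "k \<le> m"
  shows "(\<Sum>z\<in>UNIV. z ^ (m + k) * (u - z) ^ m) = - ((-1) ^ (m - k) * of_nat (m choose k) * u ^ k)"
proof -
  define c where "c l = (of_nat (m choose l) * u ^ l * (-1) ^ (m - l) :: 'a)" for l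
  have "0 < m"
    using card CARD_ge_2[where 'a='a] by simp
  have "z ^ (m + k) * (u - z) ^ m = (\<Sum>l\<le>m. c l * z ^ (m + k + (m - l)))" for z :: 'a
  proof -
    have "(u - z) ^ m = (\<Sum>l\<le>m. of_nat (m choose l) * u ^ l * (- z) ^ (m - l))"
      using binomial_ring[of u "- z" m] by simp
    then have "z ^ (m + k) * (u - z) ^ m
        = (\<Sum>l\<le>m. c l * (z ^ (m + k) * z ^ (m - l)))"
      by (simp add: sum_distrib_left c_def power_minus[of z] mult_ac)
    then show ?thesis
      by (simp only: power_add)
  qed
  then have "(\<Sum>z\<in>UNIV. z ^ (m + k) * (u - z) ^ m) = (\<Sum>l\<le>m. c l * (\<Sum>z\<in>UNIV. z ^ (m + k + (m - l))))"
    by (simp add: sum_distrib_left sum.swap[where A = UNIV])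
  also have "\<dots> = (\<Sum>l\<le>m. if l = k then - c l else 0)"
    using double_dvd_iff_eq[OF \<open>k \<le> m\<close> _ \<open>0 < m\<close>] card \<open>0 < m\<close>
    by (intro sum.cong refl) (simp add: sum_UNIV_power)
  also have "\<dots> = - c k"
    using \<open>k \<le> m\<close> by simp
  finally show ?thesis
    by (simp add: c_def mult_ac)
qed

text \<open>By Euler's criterion \<open>d ^ m\<close> is the quadratic character of \<open>d\<close>, so the maps \<open>g\<close>
  of this locale are the automorphisms of the Paley graph fixing \<open>0\<close>.\<close>
locale quadratic_character_preserving =
  fixes g :: "'a::{field,finite} \<Rightarrow> 'a" and m n :: nat
  assumes card_odd: "CARD('a) = 2 * m + 1"
    and card_power: "CARD('a) = CHAR('a) ^ n"
    and bij: "bij g" and zero: "g 0 = 0"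
    and power_diff: "(g x - g y) ^ m = (x - y) ^ m"
begin

text \<open>Carlitz's interpolation: \<open>\<Sum>\<^sub>y g(y) ^ (m + k) (x - y) ^ m\<close> is a polynomial in \<open>x\<close> of
  degree \<open>\<le> m\<close>; substituting \<open>(x - y) ^ m = (g x - g y) ^ m\<close> and reindexing by \<open>z = g y\<close>
  shows that it equals a nonzero multiple of \<open>g(x) ^ k\<close>.\<close>
lemma power_eq_poly:
  assumes "k \<le> m" and "(of_nat (m choose k) :: 'a) \<noteq> 0"
  obtains P where "degree P \<le> m" "\<And>x. poly P x = g x ^ k"
proof -
  define Q where "Q = (\<Sum>y\<in>UNIV. smult (g y ^ (m + k)) ([:- y, 1:] ^ m))"
  define \<kappa> where "\<kappa> = - ((-1) ^ (m - k) * (of_nat (m choose k) :: 'a))"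
  have "\<kappa> \<noteq> 0"
    using assms(2) by (simp add: \<kappa>_def)
  have "poly Q x = \<kappa> * g x ^ k" for x
  proof -
    have "poly Q x = (\<Sum>y\<in>UNIV. g y ^ (m + k) * (g x - g y) ^ m)"
      by (simp add: Q_def poly_sum power_diff)
    also have "\<dots> = (\<Sum>z\<in>UNIV. z ^ (m + k) * (g x - z) ^ m)"
      using sum.reindex_bij_betw[of g UNIV UNIV "\<lambda>z. z ^ (m + k) * (g x - z) ^ m"] bij
      by (simp add: bij_betw_def bij_def)
    also have "\<dots> = \<kappa> * g x ^ k"
      by (simp add: sum_power_mult_power_diff[OF card_odd assms(1)] \<kappa>_def)
    finally show ?thesis .
  qed
  moreover have "degree Q \<le> m"
    unfolding Q_def
  proof (intro degree_sum_le)
    fix y :: 'a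
    have "degree ([:- y, 1:] ^ m) = m"
      by (rule degree_linear_power)
    then show "degree (smult (g y ^ (m + k)) ([:- y, 1:] ^ m)) \<le> m"
      using degree_smult_le le_trans by metis
  qed simp
  ultimately show ?thesis
    using \<open>\<kappa> \<noteq> 0\<close> by (intro that[of "smult (inverse \<kappa>) Q"]) auto
qed

lemma CHAR_ge_3: "3 \<le> CHAR('a)"
proof -
  have "(2::'a) \<noteq> 0"
    using card_odd by (intro two_neq_zero_if_odd_card) simp
  have "CHAR('a) \<noteq> 2"
  proof
    assume "CHAR('a) = 2"
    with of_nat_CHAR[where 'a='a] have "(2::'a) = 0"
      by simp
    with \<open>(2::'a) \<noteq> 0\<close> show False ..
  qed
  moreover have "2 \<le> CHAR('a)"
    using prime_CHAR_finite_field[where 'a='a] prime_ge_2_nat by blast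
  ultimately show ?thesis
    by linarith
qed

lemma half_eq_sum_digits: "m = (\<Sum>j<n. (CHAR('a) - 1) div 2 * CHAR('a) ^ j)"
proof -
  define c where "c = (CHAR('a) - 1) div 2"
  define S where "S = (\<Sum>j<n. CHAR('a) ^ j)"
  have "odd CHAR('a)"
    using CHAR_ge_3 prime_CHAR_finite_field[where 'a='a] by (intro prime_odd_nat) auto
  then have "CHAR('a) - 1 = 2 * c"
    by (simp add: c_def)
  moreover have "2 * m = (CHAR('a) - 1) * S"
    using card_odd card_power geometric_sum_nat[of "CHAR('a)" n] by (simp add: S_def)
  ultimately have "m = c * S"
    by simp
  then show ?thesis
    by (simp add: S_def c_def sum_distrib_left)
qed

lemma digit_power_le_half:
  assumes "\<And>j. j < n \<Longrightarrow> d j \<le> (CHAR('a) - 1) div 2"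
  shows "(\<Sum>j<n. d j * CHAR('a) ^ j) \<le> m"
  unfolding half_eq_sum_digits using assms by (intro sum_mono mult_right_mono) auto

lemma of_nat_half_choose_neq_0:
  assumes "\<And>j. j < n \<Longrightarrow> d j \<le> (CHAR('a) - 1) div 2"
  shows "(of_nat (m choose (\<Sum>j<n. d j * CHAR('a) ^ j)) :: 'a) \<noteq> 0"
  unfolding half_eq_sum_digits using assms CHAR_ge_3
  by (intro of_nat_choose_digits_neq_0 prime_CHAR_finite_field) auto

lemma degree_le_if_poly_eq_digit_power:
  assumes "\<And>j. j < n \<Longrightarrow> d j \<le> (CHAR('a) - 1) div 2"
    and "degree Q < CARD('a)" and "\<And>x. poly Q x = g x ^ (\<Sum>j<n. d j * CHAR('a) ^ j)"
  shows "degree Q \<le> m"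
proof -
  obtain P where P: "degree P \<le> m" "\<And>x. poly P x = g x ^ (\<Sum>j<n. d j * CHAR('a) ^ j)"
    using power_eq_poly[OF digit_power_le_half[of d, OF assms(1)] of_nat_half_choose_neq_0[of d, OF assms(1)]] by blast
  have "Q = P"
    using assms(2,3) P card_odd by (intro poly_eqI_finite_field) auto
  with P show ?thesis
    by simp
qed

lemma of_nat_half_neq_0: "(of_nat m :: 'a) \<noteq> 0"
proof
  assume "(of_nat m :: 'a) = 0"
  then have "(of_nat CARD('a) :: 'a) = 1"
    using card_odd by simp
  then show False
    using of_nat_CARD_eq_0[where 'a='a] by simp
qed

definition g_poly :: "'a poly" where
  "g_poly = (SOME P. degree P \<le> m \<and> (\<forall>x. poly P x = g x))"

lemma g_poly: "degree g_poly \<le> m" "poly g_poly x = g x"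
proof -
  have "1 \<le> m"
    using of_nat_half_neq_0 by (cases m) auto
  moreover have "(of_nat (m choose 1) :: 'a) \<noteq> 0"
    using of_nat_half_neq_0 by simp
  ultimately obtain P where "degree P \<le> m" "\<And>x. poly P x = g x ^ 1"
    using power_eq_poly by blast
  then have "\<exists>P. degree P \<le> m \<and> (\<forall>x. poly P x = g x)"
    by auto
  from someI_ex[OF this] show "degree g_poly \<le> m" "poly g_poly x = g x"
    unfolding g_poly_def by auto
qed

lemma g_poly_neq_0: "g_poly \<noteq> 0"
proof
  assume "g_poly = 0"
  moreover obtain x where "1 = g x"
    using bij_is_surj[OF bij] by (rule surjE)
  ultimately show False
    using g_poly(2)[of x] by simp
qed

text \<open>The polynomial of degree \<open>< q\<close> representing \<open>g(x) ^ p ^ i\<close>, obtained from \<open>g_poly\<close>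
  by raising its coefficients to the \<open>p ^ i\<close>-th power and rotating the digits of its exponents.\<close>
definition frob_poly :: "nat \<Rightarrow> 'a poly" where
  "frob_poly i = (\<Sum>r\<le>degree g_poly. monom (coeff g_poly r ^ (CHAR('a) ^ i)) (rotate_digits CHAR('a) n i r))"

lemma degree_g_poly_less: "degree g_poly < CARD('a)"
  using g_poly(1) card_odd by simp

lemma poly_frob_poly: "poly (frob_poly i) x = g x ^ (CHAR('a) ^ i)"
proof -
  have "poly (frob_poly i) x = (\<Sum>r\<le>degree g_poly. (coeff g_poly r * x ^ r) ^ (CHAR('a) ^ i))"
    unfolding frob_poly_def poly_sum poly_monom using degree_g_poly_less
    by (intro sum.cong refl) (simp add: power_mult_distrib power_rotate_digits[OF card_power])
  also have "\<dots> = (\<Sum>r\<le>degree g_poly. coeff g_poly r * x ^ r) ^ (CHAR('a) ^ i)"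
    by (simp add: frobenius_sum)
  also have "\<dots> = g x ^ (CHAR('a) ^ i)"
    using g_poly(2)[of x] by (simp add: poly_altdef)
  finally show ?thesis .
qed

lemma degree_frob_poly_less: "degree (frob_poly i) < CARD('a)"
proof -
  have "degree (frob_poly i) \<le> CARD('a) - 1"
    unfolding frob_poly_def
  proof (intro degree_sum_le)
    fix r
    have "rotate_digits CHAR('a) n i r < CARD('a)"
      using CHAR_ge_3 card_power by (simp add: rotate_digits_less)
    moreover have "degree (monom (coeff g_poly r ^ CHAR('a) ^ i) (rotate_digits CHAR('a) n i r))
        \<le> rotate_digits CHAR('a) n i r"
      by (rule degree_monom_le)
    ultimately show "degree (monom (coeff g_poly r ^ CHAR('a) ^ i) (rotate_digits CHAR('a) n i r)) \<le> CARD('a) - 1"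
      by linarith
  qed simp
  then show ?thesis
    using CARD_ge_2[where 'a='a] by simp
qed

lemma coeff_frob_poly:
  assumes "r \<le> degree g_poly"
  shows "coeff (frob_poly i) (rotate_digits CHAR('a) n i r) = coeff g_poly r ^ (CHAR('a) ^ i)"
proof -
  have "rotate_digits CHAR('a) n i r' = rotate_digits CHAR('a) n i r \<longleftrightarrow> r' = r"
    if "r' \<le> degree g_poly" for r'
    using rotate_digits_inj[OF card_power, of r' r i] that assms degree_g_poly_less by auto
  then show ?thesis
    unfolding frob_poly_def coeff_sum coeff_monom using assms
    by (simp cong: if_cong)
qed

lemma frob_poly_neq_0: "frob_poly i \<noteq> 0"
proof
  assume "frob_poly i = 0"
  moreover obtain x where "1 = g x"
    using bij_is_surj[OF bij] by (rule surjE)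
  ultimately show False
    using poly_frob_poly[of i x] by simp
qed

lemma degree_frob_poly_le:
  assumes "i < n"
  shows "degree (frob_poly i) \<le> m"
proof (rule degree_le_if_poly_eq_digit_power)
  show "(if j = i then 1 else 0) \<le> (CHAR('a) - 1) div 2" for j
    using CHAR_ge_3 by auto
  show "poly (frob_poly i) x = g x ^ (\<Sum>j<n. (if j = i then 1 else 0) * CHAR('a) ^ j)" for x
    using assms by (simp add: poly_frob_poly if_distrib[of "\<lambda>c. c * _"] cong: if_cong)
qed (rule degree_frob_poly_less)

lemma poly_prod_frob_poly: "poly (\<Prod>j<n. frob_poly j ^ d j) x = g x ^ (\<Sum>j<n. d j * CHAR('a) ^ j)"
  unfolding poly_prod poly_power poly_frob_poly power_sum
  by (rule prod.cong[OF refl]) (metis mult.commute power_mult)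

lemma degree_prod_frob_poly:
  "degree (\<Prod>j<n. frob_poly j ^ d j) = (\<Sum>j<n. d j * degree (frob_poly j))"
  using frob_poly_neq_0 by (simp add: degree_prod_sum_eq Polynomial.degree_power_eq)

text \<open>Adding one factor keeps the degree below \<open>2 m < q\<close>, so the product is the reduced
  polynomial of its power of \<open>g\<close>, which has degree \<open>\<le> m\<close> by Lucas' theorem.\<close>
lemma degree_prod_frob_poly_le:
  assumes "\<And>j. j < n \<Longrightarrow> d j \<le> (CHAR('a) - 1) div 2"
  shows "degree (\<Prod>j<n. frob_poly j ^ d j) \<le> m"
  using assms
proof (induction "\<Sum>j<n. d j" arbitrary: d rule: less_induct)
  case less
  show ?case
  proof (cases "\<forall>j<n. d j = 0")
    case True
    then show ?thesis
      by simp
  next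
    case False
    then obtain j0 where "j0 < n" "d j0 \<noteq> 0"
      by blast
    define d' where "d' = d(j0 := d j0 - 1)"
    have "(\<Sum>j<n. d' j) < (\<Sum>j<n. d j)"
      unfolding d'_def using \<open>j0 < n\<close> \<open>d j0 \<noteq> 0\<close>
      by (intro sum_strict_mono_ex1) auto
    moreover have "d' j \<le> (CHAR('a) - 1) div 2" if "j < n" for j
      using less.prems[OF that] by (auto simp: d'_def)
    ultimately have "degree (\<Prod>j<n. frob_poly j ^ d' j) \<le> m"
      by (rule less.hyps)
    moreover have "degree (\<Prod>j<n. frob_poly j ^ d j)
        = degree (\<Prod>j<n. frob_poly j ^ d' j) + degree (frob_poly j0)"
    proof -
      have "d j = d' j + (if j = j0 then 1 else 0)" for j
        using \<open>d j0 \<noteq> 0\<close> by (simp add: d'_def)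
      then show ?thesis
        using \<open>j0 < n\<close> by (simp add: degree_prod_frob_poly sum.distrib distrib_right
            if_distrib[of "\<lambda>c. c * _"] cong: if_cong)
    qed
    ultimately have "degree (\<Prod>j<n. frob_poly j ^ d j) < CARD('a)"
      using degree_frob_poly_le[OF \<open>j0 < n\<close>] card_odd by linarith
    from less.prems this poly_prod_frob_poly show ?thesis
      by (rule degree_le_if_poly_eq_digit_power)
  qed
qed

lemma sum_degree_frob_poly: "(\<Sum>j<n. degree (frob_poly j)) = (\<Sum>j<n. CHAR('a) ^ j)"
proof -
  define c where "c = (CHAR('a) - 1) div 2"
  define Q where "Q = (\<Prod>j<n. frob_poly j ^ c)"
  have "degree Q \<le> m"
    unfolding Q_def c_def by (rule degree_prod_frob_poly_le) simp
  have "poly Q x = g x ^ m" for x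
    using poly_prod_frob_poly[of "\<lambda>_. c"] half_eq_sum_digits by (simp add: Q_def c_def)
  also have "g x ^ m = x ^ m" for x
    using power_diff[of x 0] zero by simp
  finally have "Q = monom 1 m"
    using \<open>degree Q \<le> m\<close> card_odd
    by (intro poly_eqI_finite_field) (simp_all add: poly_monom degree_monom_eq)
  then have "c * (\<Sum>j<n. degree (frob_poly j)) = c * (\<Sum>j<n. CHAR('a) ^ j)"
    using degree_prod_frob_poly[of "\<lambda>_. c"] half_eq_sum_digits
    by (simp add: Q_def c_def degree_monom_eq sum_distrib_left)
  moreover have "c \<noteq> 0"
    using CHAR_ge_3 by (simp add: c_def)
  ultimately show ?thesis
    by simp
qed

text \<open>Comparing \<open>\<Sum>\<^sub>i rotate_digits p n i r \<le> \<Sum>\<^sub>i degree (frob_poly i) = \<Sum>\<^sub>j p ^ j\<close> forces the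
  digit sum of every exponent occurring in \<open>g_poly\<close> to be one.\<close>
lemma exponent_of_coeff_g_poly:
  assumes "coeff g_poly r \<noteq> 0" and "r \<noteq> 0"
  shows "r = degree (frob_poly 0)" and "\<exists>j<n. r = CHAR('a) ^ j"
proof -
  let ?p = "CHAR('a)" and ?D = "\<lambda>i. degree (frob_poly i)"
  have "r \<le> degree g_poly"
    using assms(1) by (rule le_degree)
  then have "r < ?p ^ n"
    using degree_g_poly_less card_power by simp
  have rotate_le: "rotate_digits ?p n i r \<le> ?D i" for i
    using coeff_frob_poly[OF \<open>r \<le> degree g_poly\<close>, of i] assms(1) by (intro le_degree) simp
  have "0 < n"
    using \<open>r < ?p ^ n\<close> assms(2) by (cases n) auto
  then have "0 < (\<Sum>j<n. ?p ^ j)"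
    by (intro sum_pos2[of _ 0]) auto
  have "(\<Sum>j<n. digit ?p j r) * (\<Sum>j<n. ?p ^ j) = (\<Sum>i<n. rotate_digits ?p n i r)"
    by (rule sum_rotate_digits[symmetric])
  also have "\<dots> \<le> (\<Sum>i<n. ?D i)"
    using rotate_le by (rule sum_mono)
  finally have "(\<Sum>j<n. digit ?p j r) \<le> 1"
    using \<open>0 < (\<Sum>j<n. ?p ^ j)\<close> sum_degree_frob_poly by simp
  moreover have "(\<Sum>j<n. digit ?p j r) \<noteq> 0"
  proof
    assume "(\<Sum>j<n. digit ?p j r) = 0"
    then have "(\<Sum>j<n. digit ?p j r * ?p ^ j) = 0"
      by simp
    with sum_digits[where p="?p" and r=r and n=n] \<open>r < ?p ^ n\<close> assms(2) show False
      by simp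
  qed
  ultimately have digit_sum: "(\<Sum>j<n. digit ?p j r) = 1"
    by linarith
  with \<open>r < ?p ^ n\<close> show "\<exists>j<n. r = ?p ^ j"
    by (rule eq_power_if_digit_sum_eq_1)
  have "(\<Sum>i<n. rotate_digits ?p n i r) = (\<Sum>i<n. ?D i)"
    using sum_rotate_digits[where p="?p" and n=n and r=r] digit_sum sum_degree_frob_poly by simp
  then have "rotate_digits ?p n 0 r = ?D 0"
    by (rule sum_mono_inv[where f="\<lambda>i. rotate_digits ?p n i r"]) (use rotate_le \<open>0 < n\<close> in auto)
  with \<open>r < ?p ^ n\<close> show "r = ?D 0"
    by (simp add: rotate_digits_0)
qed

theorem eq_mult_frobenius: "\<exists>a j. \<forall>x. g x = a * x ^ (CHAR('a) ^ j)"
proof -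
  define d where "d = degree g_poly"
  define a where "a = coeff g_poly d"
  have "coeff g_poly 0 = 0"
    using g_poly(2)[of 0] zero by (simp add: poly_0_coeff_0)
  have "a \<noteq> 0"
    using g_poly_neq_0 by (simp add: a_def d_def)
  moreover have "d \<noteq> 0"
  proof
    assume "d = 0"
    with \<open>a \<noteq> 0\<close> \<open>coeff g_poly 0 = 0\<close> show False
      by (simp add: a_def)
  qed
  ultimately obtain j where j: "d = CHAR('a) ^ j" and d: "d = degree (frob_poly 0)"
    using exponent_of_coeff_g_poly[of d] by (auto simp: a_def)
  have "g_poly = monom a d"
  proof (rule poly_eqI)
    fix r
    show "coeff g_poly r = coeff (monom a d) r"
    proof (cases "r = d")
      case False
      then have "coeff g_poly r = 0"
        using exponent_of_coeff_g_poly(1)[of r] d \<open>coeff g_poly 0 = 0\<close> by (cases "r = 0") auto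
      with False show ?thesis
        by simp
    qed (simp add: a_def)
  qed
  then have "g x = a * x ^ (CHAR('a) ^ j)" for x
    using g_poly(2)[of x] j by (simp add: poly_monom)
  then show ?thesis
    by blast
qed

end

theorem nz_squares_preserving_imp_semilinear:
  fixes G :: "'a::{field,finite} \<Rightarrow> 'a"
  assumes odd: "odd CARD('a)" and "bij G"
    and squares: "\<And>x y. y - x \<in> nz_squares \<longleftrightarrow> G y - G x \<in> nz_squares"
  shows "\<exists>t \<sigma>. t \<in> nz_squares \<and> \<sigma> \<in> galois_prime \<and> (\<forall>x. G x = t * \<sigma> x + G 0)"
proof -
  obtain m where m: "CARD('a) = 2 * m + 1"
    using odd oddE by blast
  obtain n where n: "CARD('a) = CHAR('a) ^ n"
    using CARD_eq_CHAR_power by blast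
  define g where "g x = G x - G 0" for x
  have "inj g"
    using \<open>bij G\<close> by (auto intro!: injI simp: g_def bij_def dest: injD)
  then have "bij g"
    using finite_UNIV_inj_surj[of g] by (simp add: bij_def)
  have "(g x - g y) ^ m = (x - y) ^ m" for x y
  proof (cases "x = y")
    case False
    moreover have "G x \<noteq> G y"
      using False \<open>bij G\<close> by (auto simp: bij_def dest: injD)
    ultimately show ?thesis
      using euler_criterion[OF m, of "x - y"] euler_criterion[OF m, of "G x - G y"] squares[where x=y and y=x]
      by (simp add: g_def)
  qed simp
  then interpret quadratic_character_preserving g m n
    using m n \<open>bij g\<close> by unfold_locales (simp_all add: g_def)
  obtain a j where a: "\<And>x. g x = a * x ^ (CHAR('a) ^ j)"
    using eq_mult_frobenius by blast
  have "1 - 0 \<in> (nz_squares :: 'a set)"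
    by (simp add: nz_squares_iff exI[of _ 1])
  then have "a \<in> nz_squares"
    using squares[where x=0 and y=1] a[of 1] by (simp add: g_def)
  moreover have "G x = a * x ^ (CHAR('a) ^ j) + G 0" for x
    using a[of x] by (simp add: g_def algebra_simps)
  ultimately show ?thesis
    using frobenius_in_galois_prime[of j] by blast
qed


section \<open>Isomorphisms of the covering graphs\<close>

lemma cover_iso_semilinear:
  fixes \<alpha> \<beta> :: "'a::{field,finite} \<Rightarrow> 'l::prime_card mod_ring"
  assumes t: "t \<in> nz_squares" and \<sigma>: "\<sigma> \<in> galois_prime"
    and voltage: "\<forall>s\<in>nz_squares. \<alpha> s = \<beta> (t * \<sigma> s)"
  shows "cover_iso \<alpha> \<beta> (\<lambda>(x, i). (t * \<sigma> x + a, i + k))"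
proof -
  let ?f = "\<lambda>(x, i). (t * \<sigma> x + a, i + k)"
  have "t \<noteq> 0"
    using t by (simp add: nz_squares_def)
  have "inj ?f"
  proof (rule injI, clarify)
    fix x i y j
    assume "t * \<sigma> x + a = t * \<sigma> y + a" "i + k = j + k"
    with \<open>t \<noteq> 0\<close> have "\<sigma> x = \<sigma> y" "i = j"
      by simp_all
    with galois_primeD(1)[OF \<sigma>] show "x = y \<and> i = j"
      by (simp add: inj_eq)
  qed
  then have "bij ?f"
    using finite_UNIV_inj_surj[of ?f] by (simp add: bij_def)
  moreover have "volt_adj \<alpha> u v \<longleftrightarrow> volt_adj \<beta> (?f u) (?f v)" for u v
  proof -
    obtain x i y j where uv: "u = (x, i)" "v = (y, j)"
      by (cases u, cases v)
    have "fst (?f v) - fst (?f u) = t * \<sigma> (y - x)"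
      by (simp add: uv galois_primeD(4)[OF \<sigma>] algebra_simps)
    moreover have "snd (?f v) - snd (?f u) = j - i"
      by (simp add: uv)
    moreover have "t * \<sigma> (y - x) \<in> nz_squares \<longleftrightarrow> y - x \<in> nz_squares"
      by (simp add: nz_squares_mult_iff[OF t] galois_prime_nz_squares_iff[OF \<sigma>])
    ultimately show ?thesis
      using voltage by (auto simp: volt_adj_def uv)
  qed
  moreover have "?f (x, i + j) = (fst (?f (x, i)), snd (?f (x, i)) + j)" for x i j
    by (simp add: ac_simps)
  ultimately show ?thesis
    unfolding cover_iso_def by blast
qed

lemma additive_eq_0_if_of_nat_CHAR_neq_0:
  fixes \<psi> :: "'a::semiring_1 \<Rightarrow> 'b::field"
  assumes add: "\<And>x y. \<psi> (x + y) = \<psi> x + \<psi> y" and "(of_nat CHAR('a) :: 'b) \<noteq> 0"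
  shows "\<psi> x = 0"
proof -
  have "\<psi> 0 = 0"
    using add[of 0 0] by (simp only: add_0_left add_cancel_right_right)
  have "\<psi> (of_nat k * x) = of_nat k * \<psi> x" for k
    by (induction k) (simp_all add: \<open>\<psi> 0 = 0\<close> add distrib_right)
  from this[of "CHAR('a)"] have "of_nat CHAR('a) * \<psi> x = 0"
    by (simp add: \<open>\<psi> 0 = 0\<close>)
  with assms(2) show ?thesis
    by simp
qed

lemma of_nat_CHAR_mod_ring_neq_0:
  assumes "CARD('l::prime_card) \<noteq> CHAR('a::{field,finite})"
  shows "(of_nat CHAR('a) :: 'l mod_ring) \<noteq> 0"
proof
  assume "(of_nat CHAR('a) :: 'l mod_ring) = 0"
  then have "CARD('l) dvd CHAR('a)"
    by (rule of_nat_0_mod_ring_dvd)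
  with assms show False
    using primes_dvd_imp_eq[OF prime_card[where 'a='l] prime_CHAR_finite_field[where 'a='a]] by simp
qed

text \<open>Every element is a difference of two squares, so \<open>h - h 0\<close> is additive; an additive map
  from characteristic \<open>p\<close> into \<open>\<int>/\<ell>\<close>, \<open>\<ell> \<noteq> p\<close>, vanishes.\<close>
lemma constant_if_square_increments_constant:
  fixes h :: "'a::{field,finite} \<Rightarrow> 'l::prime_card mod_ring"
  assumes "odd CARD('a)" and "CARD('l) \<noteq> CHAR('a)"
    and increment: "\<And>x s. s \<in> nz_squares \<Longrightarrow> h (x + s) - h x = h s - h 0"
  shows "h x = h 0"
proof -
  define \<psi> where "\<psi> x = h x - h 0" for x
  have add_square: "\<psi> (x + u ^ 2) = \<psi> x + \<psi> (u ^ 2)" for x u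
    using increment[of "u ^ 2" x] by (cases "u = 0") (auto simp: \<psi>_def nz_squares_iff algebra_simps)
  have "\<psi> (x + y) = \<psi> x + \<psi> y" for x y
  proof -
    define u v where "u = (y + 1) / 2" and "v = (y - 1) / 2"
    have y: "y = u ^ 2 - v ^ 2"
      unfolding u_def v_def by (rule eq_diff_squares[OF two_neq_zero_if_odd_card[OF assms(1)]])
    have diff_square: "\<psi> (z - v ^ 2) = \<psi> z - \<psi> (v ^ 2)" for z
      using add_square[of "z - v ^ 2" v] by simp
    have "\<psi> (x + y) = \<psi> (x + u ^ 2 - v ^ 2)"
      by (simp add: y algebra_simps)
    also have "\<dots> = \<psi> x + (\<psi> (0 + u ^ 2) - \<psi> (v ^ 2))"
      by (simp only: diff_square add_square add_0_left add_diff_eq)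
    also have "\<psi> (0 + u ^ 2) - \<psi> (v ^ 2) = \<psi> y"
      by (simp only: y add_0_left diff_square)
    finally show ?thesis .
  qed
  then have "\<psi> x = 0"
    by (rule additive_eq_0_if_of_nat_CHAR_neq_0) (rule of_nat_CHAR_mod_ring_neq_0[OF assms(2)])
  then show ?thesis
    by (simp add: \<psi>_def)
qed

lemma cover_iso_apply:
  assumes "cover_iso \<alpha> \<beta> f"
  shows "f (x, i) = (fst (f (x, 0)), snd (f (x, 0)) + i)"
proof -
  have "\<forall>x i j. f (x, i + j) = (fst (f (x, i)), snd (f (x, i)) + j)"
    using assms by (simp add: cover_iso_def)
  from this[rule_format, of x 0 i] show ?thesis
    by simp
qed

lemma bij_cover_iso_fst:
  fixes \<alpha> \<beta> :: "'a::{field,finite} \<Rightarrow> 'l::prime_card mod_ring"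
  assumes "cover_iso \<alpha> \<beta> f"
  shows "bij (\<lambda>x. fst (f (x, 0)))"
proof -
  have "inj (\<lambda>x. fst (f (x, 0)))"
  proof (rule injI)
    fix x y
    assume "fst (f (x, 0)) = fst (f (y, 0))"
    then have "f (x, 0) = f (y, snd (f (x, 0)) - snd (f (y, 0)))"
      using cover_iso_apply[OF assms, of y "snd (f (x, 0)) - snd (f (y, 0))"] by (simp add: prod_eq_iff)
    moreover have "inj f"
      using assms by (simp add: cover_iso_def bij_def)
    ultimately show "x = y"
      by (auto dest: injD)
  qed
  then show ?thesis
    using finite_UNIV_inj_surj[of "\<lambda>x. fst (f (x, 0))"] by (simp add: bij_def)
qed

lemma cover_iso_nz_squares_iff:
  assumes "cover_iso \<alpha> \<beta> f"
  shows "y - x \<in> nz_squares \<longleftrightarrow> fst (f (y, 0)) - fst (f (x, 0)) \<in> nz_squares"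
proof -
  let ?G = "\<lambda>x. fst (f (x, 0))" and ?h = "\<lambda>x. snd (f (x, 0))"
  have adj: "volt_adj \<alpha> u v \<longleftrightarrow> volt_adj \<beta> (f u) (f v)" for u v
    using assms unfolding cover_iso_def by blast
  note f = cover_iso_apply[OF assms, of y]
  show ?thesis
  proof
    assume "y - x \<in> nz_squares"
    then have "volt_adj \<alpha> (x, 0) (y, \<alpha> (y - x))"
      by (simp add: volt_adj_def)
    then have "volt_adj \<beta> (f (x, 0)) (f (y, \<alpha> (y - x)))"
      by (simp only: adj)
    then show "?G y - ?G x \<in> nz_squares"
      by (simp add: f[of "\<alpha> (y - x)"] volt_adj_def)
  next
    assume "?G y - ?G x \<in> nz_squares"
    then have "volt_adj \<beta> (f (x, 0)) (f (y, ?h x + \<beta> (?G y - ?G x) - ?h y))"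
      by (simp add: f[of "?h x + \<beta> (?G y - ?G x) - ?h y"] volt_adj_def)
    then have "volt_adj \<alpha> (x, 0) (y, ?h x + \<beta> (?G y - ?G x) - ?h y)"
      by (simp only: adj)
    then show "y - x \<in> nz_squares"
      by (simp add: volt_adj_def)
  qed
qed

lemma cover_iso_snd_increment:
  assumes "cover_iso \<alpha> \<beta> f" and "s \<in> nz_squares"
  shows "snd (f (x + s, 0)) - snd (f (x, 0)) = \<beta> (fst (f (x + s, 0)) - fst (f (x, 0))) - \<alpha> s"
proof -
  have "volt_adj \<alpha> (x, 0) (x + s, \<alpha> s)"
    using assms(2) by (simp add: volt_adj_def)
  then have "volt_adj \<beta> (f (x, 0)) (f (x + s, \<alpha> s))"
    using assms(1) unfolding cover_iso_def by blast
  then have "snd (f (x + s, 0)) + \<alpha> s - snd (f (x, 0)) = \<beta> (fst (f (x + s, 0)) - fst (f (x, 0)))"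
    by (simp add: cover_iso_apply[OF assms(1), of "x + s" "\<alpha> s"] volt_adj_def)
  then show ?thesis
    by (simp add: algebra_simps)
qed

lemma cover_iso_imp_semilinear:
  fixes \<alpha> \<beta> :: "'a::{field,finite} \<Rightarrow> 'l::prime_card mod_ring"
  assumes "odd CARD('a)" and "CARD('l) \<noteq> CHAR('a)" and iso: "cover_iso \<alpha> \<beta> f"
  shows "\<exists>t \<sigma> a k. t \<in> nz_squares \<and> \<sigma> \<in> galois_prime \<and>
      (\<forall>s\<in>nz_squares. \<alpha> s = \<beta> (t * \<sigma> s)) \<and> f = (\<lambda>(x, i). (t * \<sigma> x + a, i + k))"
proof -
  define G where "G x = fst (f (x, 0))" for x
  define h where "h x = snd (f (x, 0))" for x
  have increment: "h (x + s) - h x = \<beta> (G (x + s) - G x) - \<alpha> s" if "s \<in> nz_squares" for x s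
    unfolding G_def h_def using iso that by (rule cover_iso_snd_increment)
  have "\<exists>t \<sigma>. t \<in> nz_squares \<and> \<sigma> \<in> galois_prime \<and> (\<forall>x. G x = t * \<sigma> x + G 0)"
    unfolding G_def using assms(1) bij_cover_iso_fst[OF iso] cover_iso_nz_squares_iff[OF iso]
    by (rule nz_squares_preserving_imp_semilinear)
  then obtain t \<sigma> where t: "t \<in> nz_squares" and \<sigma>: "\<sigma> \<in> galois_prime" and G: "\<And>x. G x = t * \<sigma> x + G 0"
    by blast
  have G_diff: "G (x + s) - G x = t * \<sigma> s" for x s
    using G[of "x + s"] G[of x] by (simp add: galois_primeD(2)[OF \<sigma>] algebra_simps)
  have "h (x + s) - h x = h s - h 0" if "s \<in> nz_squares" for x s
    using increment[OF that, of x] increment[OF that, of 0] G_diff[of 0 s] by (simp add: G_diff)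
  with assms(1,2) have h: "h x = h 0" for x
    by (rule constant_if_square_increments_constant)
  have "\<alpha> s = \<beta> (t * \<sigma> s)" if "s \<in> nz_squares" for s
    using increment[OF that, of 0] h[of s] G_diff[of 0 s] by simp
  moreover have "f = (\<lambda>(x, i). (t * \<sigma> x + G 0, i + h 0))"
  proof (rule ext, clarify)
    fix x i
    show "f (x, i) = (t * \<sigma> x + G 0, i + h 0)"
      using cover_iso_apply[OF iso, of x i] G[of x] h[of x] by (simp add: G_def h_def add.commute)
  qed
  ultimately show ?thesis
    using t \<sigma> by blast
qed

theorem proposition3p2:
  fixes \<alpha> \<beta> :: "'a::{field,finite} \<Rightarrow> 'l::prime_card mod_ring"
  assumes "CARD('a) mod 4 = 1"
    and "CARD('l) \<noteq> CHAR('a)"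
    and "voltage_assignment \<alpha>" and "voltage_assignment \<beta>"
  shows "cover_iso \<alpha> \<beta> f \<longleftrightarrow>
    (\<exists>t \<sigma> a k. t \<in> nz_squares \<and> \<sigma> \<in> galois_prime \<and>
        (\<forall>s\<in>nz_squares. \<alpha> s = \<beta> (t * \<sigma> s)) \<and>
        f = (\<lambda>(x, i). (t * \<sigma> x + a, i + k)))"
proof -
  have "odd CARD('a)"
    using assms(1) by presburger
  show ?thesis
  proof
    assume "cover_iso \<alpha> \<beta> f"
    with \<open>odd CARD('a)\<close> assms(2) show "\<exists>t \<sigma> a k. t \<in> nz_squares \<and> \<sigma> \<in> galois_prime \<and>
        (\<forall>s\<in>nz_squares. \<alpha> s = \<beta> (t * \<sigma> s)) \<and> f = (\<lambda>(x, i). (t * \<sigma> x + a, i + k))"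
      by (rule cover_iso_imp_semilinear)
  next
    assume "\<exists>t \<sigma> a k. t \<in> nz_squares \<and> \<sigma> \<in> galois_prime \<and>
        (\<forall>s\<in>nz_squares. \<alpha> s = \<beta> (t * \<sigma> s)) \<and> f = (\<lambda>(x, i). (t * \<sigma> x + a, i + k))"
    then show "cover_iso \<alpha> \<beta> f"
      using cover_iso_semilinear by auto
  qed
qed

end
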